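(* (a) For all $\beta,\eta,\hat v(0)>0$ and $\mu\in\mathbb{R}$, the equation $$\sum_{p\in\Lambda^*}\frac{1}{e^{\beta(p^2-\widetilde\mu)}-1}=\frac{(\mu-\widetilde\mu)\eta}{\hat v(0)}$$ has a unique solution $\widetilde\mu\in(-\infty,0)$. (b) Fix $\kappa\in(0,\infty)$, $\hat v(0)>0$ and $c_0\in(0,1]$, and let $\beta=\kappa\beta_{\mathrm c}(\eta)$ with $\beta_{\mathrm c}(\eta)=\frac{1}{4\pi}\big(\frac{\eta}{\zeta(3/2)}\big)^{-2/3}$. There exist constants $c\in(0,1]$, $C>0$ and $\eta_0>0$ (depending on $\kappa,\hat v(0),c_0$) such that for all $\eta\ge\eta_0$ and all $\mu$ with $-c_0^{-1}\eta^{2/3}\le\mu\le c_0^{-1}$, the solution $\widetilde\mu$ of (a) satisfies $c\le\mu-\widetilde\mu\le c^{-1}$; moreover $-\widetilde\mu\le C$ if $\mu\ge0$, and $-\widetilde\mu\le C\eta^{2/3}$ if $\mu<0$. (c) Under the assumptions of (b), possibly after decreasing $c$, $\;c\eta\le\sum_{p\in\Lambda^*}\frac{1}{e^{\beta(p^2-\widetilde\mu)}-1}\le c^{-1}\eta$.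
   Context: $\Lambda^*=2\pi\mathbb{Z}^3$ (the dual lattice of the unit torus $[0,1]^3$); $\zeta$ is the Riemann zeta function; $\hat v(0)>0$ is a given positive constant. *)

theory Defs
  imports "HOL-Analysis.Analysis"
begin

text \<open>Dual lattice \<Lambda>* = 2\<pi>Z^3, parametrised by n \<in> Z^3 via p = 2\<pi> n.\<close>

definition lattice_pt :: "int \<times> int \<times> int \<Rightarrow> real \<times> real \<times> real" where
  "lattice_pt n = (case n of (a, b, c) \<Rightarrow> (2*pi*real_of_int a, 2*pi*real_of_int b, 2*pi*real_of_int c))"

definition psq :: "int \<times> int \<times> int \<Rightarrow> real" where
  "psq n = (case lattice_pt n of (x, y, z) \<Rightarrow> x^2 + y^2 + z^2)"

definition bose_sum :: "real \<Rightarrow> real \<Rightarrow> real" where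
  "bose_sum \<beta> m = (\<Sum>\<^sub>\<infinity>n\<in>(UNIV :: (int \<times> int \<times> int) set). 1 / (exp (\<beta> * (psq n - m)) - 1))"

definition zeta32 :: real where
  "zeta32 = (\<Sum>k. 1 / (real (Suc k)) powr (3/2))"

definition beta_c :: "real \<Rightarrow> real" where
  "beta_c \<eta> = (1 / (4*pi)) * (\<eta> / zeta32) powr (-(2/3))"

end

theory Submission
  imports Defs
begin

(*
  Writing p = 2 pi n with n in Z^3, the Bose sum at inverse temperature \<beta> and chemical
  potential m < 0 is the lattice sum of bose (b |n|^2 + a) with b = 4 pi^2 \<beta> and a = -\<beta> m > 0,
  where bose x = 1 / (e^x - 1).

  For 0 < b <= 1 this sum is bose a + O(b^(-3/2)): the sup-norm shell of radius k has at most
  26 k^2 points, and bounding bose x by 1/x on the shells with k <= b^(-1/2) and by 4/x^2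
  beyond gives the upper bound, while the (2K+1)^3 points of the cube of radius
  K = floor (b^(-1/2)) each contribute at least e^(-(a+3)), which gives the lower bound.

  (a) The sum is continuous and strictly increasing in m on (-oo, 0) and blows up as m -> 0
  through its n = 0 term, whereas the right-hand side (\<mu> - m) \<eta> / v0 decreases in m;
  the intermediate value theorem gives the unique solution.

  (b), (c) For \<beta> = \<kappa> \<beta>_c(\<eta>) ~ \<eta>^(-2/3) we have b^(-3/2) ~ \<eta>, so the equation
  reads (\<mu> - m) \<eta> / v0 ~ \<eta> up to the n = 0 term. If \<mu> - m < 1, then -\<beta> m stays bounded
  and the lower bound gives \<mu> - m >= const; if \<mu> - m > 2/c0, then -m >= 1/c0, so
  bose (-\<beta> m) <= 1/(-\<beta> m) = O(\<eta>) and the upper bound gives \<mu> - m <= const.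
*)

definition bose :: "real \<Rightarrow> real" where
  "bose x = 1 / (exp x - 1)"

lemma bose_pos: "0 < x \<Longrightarrow> 0 < bose x"
  by (simp add: bose_def)

lemma bose_antimono: "0 < x \<Longrightarrow> x \<le> y \<Longrightarrow> bose y \<le> bose x"
  unfolding bose_def by (rule divide_left_mono) auto

lemma bose_strict_antimono: "0 < x \<Longrightarrow> x < y \<Longrightarrow> bose y < bose x"
  unfolding bose_def by (rule divide_strict_left_mono) auto

lemma bose_le_inverse:
  assumes "0 < x"
  shows "bose x \<le> 1 / x"
proof -
  have "x \<le> exp x - 1"
    using exp_ge_add_one_self[of x] by linarith
  with assms show ?thesis
    unfolding bose_def by (intro divide_left_mono) auto
qed

lemma bose_le_inverse_square:
  assumes "0 < x"
  shows "bose x \<le> 4 / x^2"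
proof -
  have "1 + x/2 \<le> exp (x/2)"
    by (rule exp_ge_add_one_self)
  then have "(1 + x/2)^2 \<le> exp (x/2)^2"
    using assms by (intro power_mono) auto
  also have "exp (x/2)^2 = exp x"
    by (simp flip: exp_of_nat_mult)
  finally have "1 + x + x^2/4 \<le> exp x"
    by (simp add: power2_eq_square algebra_simps)
  then have "x^2/4 \<le> exp x - 1"
    using assms by linarith
  moreover have "0 < x^2/4"
    using assms by simp
  ultimately have "1 / (exp x - 1) \<le> 1 / (x^2/4)"
    using assms by (intro divide_left_mono) (auto intro!: mult_pos_pos)
  then show ?thesis
    by (simp add: bose_def)
qed

lemma exp_minus_le_bose: "0 < x \<Longrightarrow> exp (-x) \<le> bose x"
  by (simp add: bose_def exp_minus field_simps)

lemma inverse_minus_one_le_bose: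
  assumes "0 < x"
  shows "1/x - 1 \<le> bose x"
proof -
  have "1 - x \<le> exp (-x)"
    by (rule exp_minus_ge)
  then have "(1 - x) * (exp x - 1) \<le> x"
    by (simp add: exp_minus field_simps)
  moreover have "0 < exp x - 1"
    using assms by simp
  ultimately have "(1 - x) / x \<le> 1 / (exp x - 1)"
    using assms by (simp add: divide_simps mult.commute)
  then show ?thesis
    using assms by (simp add: bose_def diff_divide_distrib)
qed

lemma bose_diff:
  assumes "0 < x" "x \<le> y"
  shows "bose x - bose y = (exp (y - x) - 1) * (1 + bose x) * bose y"
proof -
  define E F where "E = exp x" and "F = exp (y - x)"
  have "E > 1" "E * F > 1"
    using assms by (simp_all add: E_def F_def flip: exp_add)
  then have "1 / (E - 1) - 1 / (E * F - 1) = (F - 1) * (E / (E - 1)) * (1 / (E * F - 1))"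
    by (simp add: field_simps)
  moreover have "1 + 1 / (E - 1) = E / (E - 1)"
    using \<open>E > 1\<close> by (simp add: field_simps)
  ultimately show ?thesis
    by (simp add: bose_def E_def F_def flip: exp_add)
qed

definition sqnorm :: "int \<times> int \<times> int \<Rightarrow> int" where
  "sqnorm n = (case n of (x, y, z) \<Rightarrow> x^2 + y^2 + z^2)"

definition supnorm :: "int \<times> int \<times> int \<Rightarrow> nat" where
  "supnorm n = (case n of (x, y, z) \<Rightarrow> nat (max \<bar>x\<bar> (max \<bar>y\<bar> \<bar>z\<bar>)))"

definition cube :: "nat \<Rightarrow> (int \<times> int \<times> int) set" where
  "cube R = {-int R..int R} \<times> {-int R..int R} \<times> {-int R..int R}"

lemma psq_eq_sqnorm: "psq n = 4 * pi^2 * of_int (sqnorm n)"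
  by (cases n) (simp add: psq_def lattice_pt_def sqnorm_def power_mult_distrib algebra_simps)

lemma sqnorm_nonneg: "0 \<le> sqnorm n"
  by (cases n) (simp add: sqnorm_def)

lemma sqnorm_zero [simp]: "sqnorm 0 = 0"
  by (simp add: sqnorm_def zero_prod_def)

lemma supnorm_pos: "n \<noteq> 0 \<Longrightarrow> 1 \<le> supnorm n"
  by (cases n) (auto simp: supnorm_def zero_prod_def)

lemma supnorm_sq_le_sqnorm: "int (supnorm n)^2 \<le> sqnorm n"
proof (cases n)
  case (fields x y z)
  have "max \<bar>x\<bar> (max \<bar>y\<bar> \<bar>z\<bar>) ^ 2 \<in> {x^2, y^2, z^2}"
    by (auto simp: max_def)
  then show ?thesis
    using fields by (auto simp: sqnorm_def supnorm_def)
qed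

lemma sqnorm_le_supnorm_sq: "sqnorm n \<le> 3 * int (supnorm n)^2"
proof (cases n)
  case (fields x y z)
  define s where "s = max \<bar>x\<bar> (max \<bar>y\<bar> \<bar>z\<bar>)"
  have "\<bar>x\<bar> \<le> \<bar>s\<bar>" "\<bar>y\<bar> \<le> \<bar>s\<bar>" "\<bar>z\<bar> \<le> \<bar>s\<bar>"
    by (auto simp: s_def)
  then have "x^2 \<le> s^2" "y^2 \<le> s^2" "z^2 \<le> s^2"
    by (simp_all add: abs_le_square_iff)
  moreover have "0 \<le> s"
    by (simp add: s_def)
  ultimately show ?thesis
    using fields by (simp add: sqnorm_def supnorm_def s_def[symmetric])
qed

lemma mem_cube_iff: "n \<in> cube R \<longleftrightarrow> supnorm n \<le> R"
  by (cases n) (auto simp: cube_def supnorm_def)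

lemma finite_cube [simp]: "finite (cube R)"
  by (simp add: cube_def)

lemma card_cube: "card (cube R) = (2 * R + 1)^3"
proof -
  have "card {-int R..int R} = 2 * R + 1"
    by simp
  then show ?thesis
    by (simp add: cube_def card_cartesian_product power3_eq_cube)
qed

lemma cube_mono: "R \<le> R' \<Longrightarrow> cube R \<subseteq> cube R'"
  by (auto simp: mem_cube_iff)

lemma cube_zero: "cube 0 = {0}"
  by (auto simp: cube_def zero_prod_def)

lemma card_cube_shell: "real (card (cube (Suc R) - cube R)) \<le> 26 * real (Suc R)^2"
proof -
  have "card (cube (Suc R) - cube R) = (2 * Suc R + 1)^3 - (2 * R + 1)^3"
    using cube_mono[of R "Suc R"] by (simp add: card_Diff_subset card_cube)
  moreover have "(2 * R + 1)^3 \<le> (2 * Suc R + 1)^3"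
    by (intro power_mono) auto
  ultimately have "real (card (cube (Suc R) - cube R)) = 24 * real R^2 + 48 * real R + 26"
    by (simp add: of_nat_diff power3_eq_cube power2_eq_square algebra_simps)
  then show ?thesis
    by (simp add: power2_eq_square algebra_simps)
qed

lemma sum_cube_le_shells:
  assumes "\<And>k. 0 \<le> \<phi> k"
  shows "(\<Sum>n\<in>cube R - {0}. \<phi> (supnorm n)) \<le> (\<Sum>k=1..R. 26 * real k^2 * \<phi> k)"
proof (induction R)
  case 0
  then show ?case
    by (simp add: cube_zero)
next
  case (Suc R)
  have "cube (Suc R) - {0} = (cube R - {0}) \<union> (cube (Suc R) - cube R)"
    using cube_mono[of R "Suc R"] cube_mono[of 0 R] cube_zero by auto
  then have "(\<Sum>n\<in>cube (Suc R) - {0}. \<phi> (supnorm n)) =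
      (\<Sum>n\<in>cube R - {0}. \<phi> (supnorm n)) + (\<Sum>n\<in>cube (Suc R) - cube R. \<phi> (supnorm n))"
    by (simp add: sum.union_disjoint Diff_Int_distrib2)
  also have "(\<Sum>n\<in>cube (Suc R) - cube R. \<phi> (supnorm n)) = (\<Sum>n\<in>cube (Suc R) - cube R. \<phi> (Suc R))"
    by (intro sum.cong refl arg_cong[where f = \<phi>]) (auto simp: mem_cube_iff)
  also have "\<dots> \<le> 26 * real (Suc R)^2 * \<phi> (Suc R)"
    using mult_right_mono[OF card_cube_shell assms] by simp
  finally show ?case
    using Suc.IH by simp
qed

lemma sum_inverse_squares_tail:
  assumes "1 \<le> K"
  shows "(\<Sum>k\<in>{K<..R}. 1 / real k^2) \<le> 1 / real K"
proof (cases "K \<le> R")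
  case True
  have "(\<Sum>k\<in>{K<..R'}. 1 / real k^2) \<le> 1 / real K - 1 / real R'" if "K \<le> R'" for R'
    using that
  proof (induction R' rule: dec_induct)
    case base
    then show ?case by simp
  next
    case (step R)
    have "1 \<le> real R"
      using assms step by simp
    then have "1 / real (Suc R)^2 \<le> 1 / (real R * real (Suc R))"
      by (intro divide_left_mono) (auto simp: power2_eq_square)
    also have "\<dots> = 1 / real R - 1 / real (Suc R)"
      using \<open>1 \<le> real R\<close> by (simp add: field_simps)
    finally have "1 / real (Suc R)^2 \<le> 1 / real R - 1 / real (Suc R)" .
    moreover have "{K<..Suc R} = insert (Suc R) {K<..R}"
      using step by auto
    ultimately show ?case
      using step.IH by simp
  qed
  from this[OF True] show ?thesis
    by (rule order_trans) simp
qed simp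

definition bose_term :: "real \<Rightarrow> real \<Rightarrow> int \<times> int \<times> int \<Rightarrow> real" where
  "bose_term b a n = bose (b * of_int (sqnorm n) + a)"

definition lattice_bose_sum :: "real \<Rightarrow> real \<Rightarrow> real" where
  "lattice_bose_sum b a = (\<Sum>\<^sub>\<infinity>n. bose_term b a n)"

lemma bose_sum_eq_lattice_bose_sum: "bose_sum \<beta> m = lattice_bose_sum (4 * pi^2 * \<beta>) (- \<beta> * m)"
proof -
  have "(\<lambda>n. 1 / (exp (\<beta> * (psq n - m)) - 1)) = bose_term (4 * pi^2 * \<beta>) (- \<beta> * m)"
    by (simp add: fun_eq_iff bose_term_def bose_def psq_eq_sqnorm algebra_simps)
  then show ?thesis
    by (simp add: bose_sum_def lattice_bose_sum_def)
qed

lemma bose_term_pos: "0 \<le> b \<Longrightarrow> 0 < a \<Longrightarrow> 0 < bose_term b a n"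
  unfolding bose_term_def using sqnorm_nonneg[of n]
  by (intro bose_pos add_nonneg_pos) auto

lemma bose_term_zero [simp]: "bose_term b a 0 = bose a"
  by (simp add: bose_term_def)

lemma bose_term_le_supnorm:
  assumes "0 < b" "0 \<le> a" "n \<noteq> 0"
  shows "bose_term b a n \<le> bose (b * real (supnorm n)^2)"
proof -
  have "real (supnorm n)^2 \<le> of_int (sqnorm n)"
    using supnorm_sq_le_sqnorm[of n] by (metis of_int_le_iff of_int_of_nat_eq of_int_power)
  then have "b * real (supnorm n)^2 \<le> b * of_int (sqnorm n)"
    using assms by (simp add: mult_left_mono)
  then have "b * real (supnorm n)^2 \<le> b * of_int (sqnorm n) + a"
    using assms by linarith
  with assms supnorm_pos[of n] show ?thesis
    unfolding bose_term_def by (intro bose_antimono) auto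
qed

lemma sum_shell_weights_le:
  assumes "0 < b" "1 \<le> K"
  shows "(\<Sum>k=1..R. 26 * real k^2 * (if k \<le> K then 1 / (b * real k^2) else 4 / (b * real k^2)^2))
    \<le> 26 * real K / b + 104 / (b^2 * real K)"
    (is "(\<Sum>k=1..R. ?f k) \<le> _")
proof -
  have "(\<Sum>k=1..R. ?f k) \<le> (\<Sum>k\<in>{1..K} \<union> {K<..R}. ?f k)"
    using assms by (intro sum_mono2) auto
  also have "\<dots> = (\<Sum>k=1..K. ?f k) + (\<Sum>k\<in>{K<..R}. ?f k)"
    by (rule sum.union_disjoint) auto
  also have "(\<Sum>k=1..K. ?f k) = (\<Sum>k=1..K. 26 / b)"
    by (intro sum.cong) auto
  also have "\<dots> = 26 * real K / b"
    by simp
  also have "(\<Sum>k\<in>{K<..R}. ?f k) = 104 / b^2 * (\<Sum>k\<in>{K<..R}. 1 / real k^2)"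
    by (simp add: sum_distrib_left power2_eq_square mult.assoc)
  also have "\<dots> \<le> 104 / b^2 * (1 / real K)"
    using assms by (intro mult_left_mono sum_inverse_squares_tail) auto
  also have "\<dots> = 104 / (b^2 * real K)"
    by simp
  finally show ?thesis
    by simp
qed

lemma sum_bose_term_le:
  assumes "0 < b" "0 < a" "1 \<le> K" "finite F"
  shows "(\<Sum>n\<in>F. bose_term b a n) \<le> bose a + 26 * real K / b + 104 / (b^2 * real K)"
proof -
  define R where "R = Max (supnorm ` F)"
  define \<phi> where "\<phi> k = (if k \<le> K then 1 / (b * real k^2) else 4 / (b * real k^2)^2)" for k
  have "F \<subseteq> cube R"
    using assms(4) by (auto simp: mem_cube_iff R_def)
  have "(\<Sum>n\<in>F. bose_term b a n) \<le> (\<Sum>n\<in>insert 0 (cube R). bose_term b a n)"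
    using \<open>F \<subseteq> cube R\<close> less_imp_le[OF bose_term_pos] assms by (intro sum_mono2) auto
  also have "\<dots> = bose a + (\<Sum>n\<in>cube R - {0}. bose_term b a n)"
    by (simp add: sum.insert_remove)
  also have "(\<Sum>n\<in>cube R - {0}. bose_term b a n) \<le> (\<Sum>n\<in>cube R - {0}. \<phi> (supnorm n))"
  proof (rule sum_mono)
    fix n assume "n \<in> cube R - {0}"
    then have le: "bose_term b a n \<le> bose (b * real (supnorm n)^2)"
      and pos: "0 < b * real (supnorm n)^2"
      using assms supnorm_pos[of n] by (auto intro: bose_term_le_supnorm)
    show "bose_term b a n \<le> \<phi> (supnorm n)"
      using order_trans[OF le bose_le_inverse[OF pos]] order_trans[OF le bose_le_inverse_square[OF pos]]
      by (simp add: \<phi>_def)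
  qed
  also have "\<dots> \<le> (\<Sum>k=1..R. 26 * real k^2 * \<phi> k)"
    using assms by (intro sum_cube_le_shells) (simp add: \<phi>_def)
  also have "\<dots> \<le> 26 * real K / b + 104 / (b^2 * real K)"
    unfolding \<phi>_def by (rule sum_shell_weights_le[OF assms(1,3)])
  finally show ?thesis
    by simp
qed

lemma bose_term_summable:
  assumes "0 < b" "0 < a"
  shows "bose_term b a summable_on UNIV"
proof (rule nonneg_bdd_above_summable_on)
  show "bdd_above (sum (bose_term b a) ` {F. F \<subseteq> UNIV \<and> finite F})"
    using sum_bose_term_le[OF assms order_refl] by (intro bdd_aboveI) auto
qed (use assms in \<open>auto intro: less_imp_le bose_term_pos\<close>)

lemma lattice_bose_sum_le:
  assumes "0 < b" "0 < a" "1 \<le> K"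
  shows "lattice_bose_sum b a \<le> bose a + 26 * real K / b + 104 / (b^2 * real K)"
  unfolding lattice_bose_sum_def using assms
  by (intro infsum_le_finite_sums bose_term_summable sum_bose_term_le) auto

lemma sum_le_lattice_bose_sum:
  assumes "0 < b" "0 < a" "finite F"
  shows "(\<Sum>n\<in>F. bose_term b a n) \<le> lattice_bose_sum b a"
  unfolding lattice_bose_sum_def using assms
  by (intro finite_sum_le_infsum bose_term_summable) (auto intro: less_imp_le bose_term_pos)

lemma bose_le_lattice_bose_sum: "0 < b \<Longrightarrow> 0 < a \<Longrightarrow> bose a \<le> lattice_bose_sum b a"
  using sum_le_lattice_bose_sum[of b a "{0}"] by simp

lemma lattice_bose_sum_nonneg:
  assumes "0 < b" "0 < a"
  shows "0 \<le> lattice_bose_sum b a"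
  using bose_le_lattice_bose_sum[OF assms] bose_pos[OF assms(2)] by linarith

lemma powr_minus_half:
  fixes b :: real
  assumes "0 < b" "b \<le> 1"
  shows "(b powr (-1/2))^2 = 1 / b" and "1 \<le> b powr (-1/2)" and "(b powr (-1/2))^3 = b powr (-3/2)"
proof -
  have "(b powr (-1/2))^2 = b powr (-1/2 + -1/2)"
    by (simp only: power2_eq_square powr_add)
  also have "\<dots> = 1 / b"
    using assms by (simp add: powr_minus_divide)
  finally show "(b powr (-1/2))^2 = 1 / b" .
  then have "1^2 \<le> (b powr (-1/2))^2"
    using assms by (simp add: le_divide_eq_1)
  then show "1 \<le> b powr (-1/2)"
    by (rule power2_le_imp_le) simp
  have "(b powr (-1/2))^3 = b powr (-1/2 + -1/2 + -1/2)"
    by (simp only: power3_eq_cube powr_add)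
  also have "\<dots> = b powr (-3/2)"
    by simp
  finally show "(b powr (-1/2))^3 = b powr (-3/2)" .
qed

lemma exp_le_bose_term_on_cube:
  assumes "0 < b" "0 < a" "b * real K^2 \<le> 1" "n \<in> cube K"
  shows "exp (-(a + 3)) \<le> bose_term b a n"
proof -
  have "sqnorm n \<le> 3 * int (supnorm n)^2"
    by (rule sqnorm_le_supnorm_sq)
  also have "\<dots> \<le> 3 * int K^2"
    using assms(4) power_mono[of "int (supnorm n)" "int K" 2] by (simp add: mem_cube_iff)
  finally have "of_int (sqnorm n) \<le> (of_int (3 * int K^2) :: real)"
    by (simp only: of_int_le_iff)
  then have "b * of_int (sqnorm n) \<le> b * (3 * real K^2)"
    using assms(1) by (simp add: mult_left_mono)
  then have "b * of_int (sqnorm n) + a \<le> a + 3"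
    using assms(3) by simp
  moreover have "0 < b * of_int (sqnorm n) + a"
    using assms sqnorm_nonneg[of n] by (simp add: add_nonneg_pos)
  ultimately have "exp (-(a + 3)) \<le> exp (-(b * of_int (sqnorm n) + a))"
    by simp
  also have "\<dots> \<le> bose_term b a n"
    unfolding bose_term_def using \<open>0 < b * of_int (sqnorm n) + a\<close> by (rule exp_minus_le_bose)
  finally show ?thesis .
qed

lemma lattice_bose_sum_lower:
  assumes "0 < b" "b \<le> 1" "0 < a"
  shows "exp (-(a + 3)) * b powr (-3/2) \<le> lattice_bose_sum b a"
proof -
  define w where "w = b powr (-1/2)"
  have w2: "w^2 = 1 / b" and "1 \<le> w" and w3: "w^3 = b powr (-3/2)"
    using powr_minus_half[OF assms(1,2)] by (simp_all add: w_def)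
  define K where "K = nat \<lfloor>w\<rfloor>"
  have "real K \<le> w" and "w \<le> real (2 * K + 1)"
    using \<open>1 \<le> w\<close> by (simp_all add: K_def) linarith
  then have "b * real K^2 \<le> b * w^2"
    using assms by (intro mult_left_mono power_mono) auto
  then have bK: "b * real K^2 \<le> 1"
    using w2 assms by simp
  have "w^3 \<le> real (2 * K + 1)^3"
    using \<open>1 \<le> w\<close> \<open>w \<le> real (2 * K + 1)\<close> by (intro power_mono) auto
  then have "exp (-(a + 3)) * b powr (-3/2) \<le> (\<Sum>n\<in>cube K. exp (-(a + 3)))"
    by (simp add: w3 card_cube)
  also have "\<dots> \<le> (\<Sum>n\<in>cube K. bose_term b a n)"
    using assms bK by (intro sum_mono exp_le_bose_term_on_cube) auto
  also have "\<dots> \<le> lattice_bose_sum b a"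
    using assms by (intro sum_le_lattice_bose_sum) auto
  finally show ?thesis .
qed

lemma lattice_bose_sum_upper:
  assumes "0 < b" "b \<le> 1" "0 < a"
  shows "lattice_bose_sum b a \<le> bose a + 156 * b powr (-3/2)"
proof -
  define w where "w = b powr (-1/2)"
  have w2: "w^2 = 1 / b" and "1 \<le> w" and w3: "w^3 = b powr (-3/2)"
    using powr_minus_half[OF assms(1,2)] by (simp_all add: w_def)
  define K where "K = nat \<lceil>w\<rceil>"
  have Kw: "w \<le> real K" and K2w: "real K \<le> 2 * w"
    using \<open>1 \<le> w\<close> by (simp_all add: K_def) linarith
  then have "1 \<le> K"
    using \<open>1 \<le> w\<close> by simp
  have "26 * real K / b = 26 * real K * w^2"
    using w2 by simp
  also have "\<dots> \<le> 26 * (2 * w) * w^2"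
    using K2w by (simp add: mult_right_mono)
  finally have first: "26 * real K / b \<le> 52 * w^3"
    by (simp add: power2_eq_square power3_eq_cube)
  have "104 / (b^2 * real K) = 104 * w^4 / real K"
    using w2 by (simp add: power4_eq_xxxx power2_eq_square field_simps)
  also have "\<dots> \<le> 104 * w^4 / w"
    using Kw \<open>1 \<le> w\<close> by (intro divide_left_mono) auto
  finally have second: "104 / (b^2 * real K) \<le> 104 * w^3"
    using \<open>1 \<le> w\<close> by (simp add: power4_eq_xxxx power3_eq_cube)
  have "lattice_bose_sum b a \<le> bose a + 26 * real K / b + 104 / (b^2 * real K)"
    using assms \<open>1 \<le> K\<close> by (intro lattice_bose_sum_le) auto
  with first second show ?thesis
    by (simp add: w3)
qed

lemma lattice_bose_sum_strict_antimono:
  assumes "0 < b" "0 < a1" "a1 < a2"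
  shows "lattice_bose_sum b a2 < lattice_bose_sum b a1"
  unfolding lattice_bose_sum_def
proof (rule has_sum_strict_mono)
  show "(bose_term b a2 has_sum (\<Sum>\<^sub>\<infinity>n. bose_term b a2 n)) UNIV"
    and "(bose_term b a1 has_sum (\<Sum>\<^sub>\<infinity>n. bose_term b a1 n)) UNIV"
    using assms by (auto intro!: has_sum_infsum bose_term_summable)
  show "bose_term b a2 n \<le> bose_term b a1 n" for n
    using assms sqnorm_nonneg[of n] unfolding bose_term_def
    by (intro bose_antimono add_nonneg_pos) auto
  show "bose_term b a2 0 < bose_term b a1 0"
    using assms by (simp add: bose_strict_antimono)
qed simp

lemma lattice_bose_sum_antimono:
  "0 < b \<Longrightarrow> 0 < a1 \<Longrightarrow> a1 \<le> a2 \<Longrightarrow> lattice_bose_sum b a2 \<le> lattice_bose_sum b a1"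
  using lattice_bose_sum_strict_antimono[of b a1 a2] by (cases "a1 = a2") auto

lemma lattice_bose_sum_diff_le:
  assumes "0 < b" "0 < a1" "a1 \<le> a2"
  shows "lattice_bose_sum b a1 - lattice_bose_sum b a2
    \<le> (exp (a2 - a1) - 1) * (1 + bose a1) * lattice_bose_sum b a2"
proof -
  define L where "L = (exp (a2 - a1) - 1) * (1 + bose a1)"
  have termwise: "bose_term b a1 n \<le> bose_term b a2 n + L * bose_term b a2 n" for n
  proof -
    define x where "x = b * of_int (sqnorm n)"
    have "0 \<le> x"
      using assms sqnorm_nonneg[of n] by (simp add: x_def)
    then have "bose (x + a1) - bose (x + a2) = (exp (a2 - a1) - 1) * (1 + bose (x + a1)) * bose (x + a2)"
      using assms by (subst bose_diff) auto
    also have "\<dots> \<le> L * bose (x + a2)"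
      unfolding L_def using assms \<open>0 \<le> x\<close> bose_pos[of "x + a2"]
      by (intro mult_right_mono mult_left_mono add_left_mono bose_antimono) auto
    finally show ?thesis
      by (simp add: bose_term_def x_def)
  qed
  have "lattice_bose_sum b a1 \<le> (\<Sum>\<^sub>\<infinity>n. bose_term b a2 n + L * bose_term b a2 n)"
    unfolding lattice_bose_sum_def using assms
    by (intro infsum_mono termwise summable_on_add summable_on_cmult_right bose_term_summable) auto
  also have "\<dots> = lattice_bose_sum b a2 + L * lattice_bose_sum b a2"
    unfolding lattice_bose_sum_def using assms
    by (subst infsum_add) (auto intro!: bose_term_summable summable_on_cmult_right simp: infsum_cmult_right')
  finally show ?thesis
    by (simp add: L_def)
qed

lemma exp_minus_one_le_mult_exp: "exp d - 1 \<le> d * exp (d::real)"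
  using exp_minus_ge[of d] by (simp add: exp_minus field_simps)

lemma lattice_bose_sum_lipschitz:
  assumes "0 < b" "0 < alo"
  shows "(exp (ahi - alo) * (1 + bose alo) * lattice_bose_sum b alo)-lipschitz_on {alo..ahi}
    (lattice_bose_sum b)"
    (is "?L-lipschitz_on _ _")
proof -
  have ordered: "\<bar>lattice_bose_sum b x - lattice_bose_sum b y\<bar> \<le> ?L * \<bar>x - y\<bar>"
    if "alo \<le> x" "x \<le> y" "y \<le> ahi" for x y
  proof -
    have "0 < x"
      using assms that by simp
    then have "0 < bose x" "0 < bose alo"
      using assms by (simp_all add: bose_pos)
    have "lattice_bose_sum b x - lattice_bose_sum b y
        \<le> (exp (y - x) - 1) * (1 + bose x) * lattice_bose_sum b y"
      using assms that by (intro lattice_bose_sum_diff_le) auto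
    also have "\<dots> \<le> ((y - x) * exp (ahi - alo)) * (1 + bose alo) * lattice_bose_sum b alo"
    proof (intro mult_mono)
      show "exp (y - x) - 1 \<le> (y - x) * exp (ahi - alo)"
        by (rule order_trans[OF exp_minus_one_le_mult_exp mult_left_mono]) (use that in auto)
      show "1 + bose x \<le> 1 + bose alo"
        using assms that by (simp add: bose_antimono)
      show "lattice_bose_sum b y \<le> lattice_bose_sum b alo"
        using assms that by (intro lattice_bose_sum_antimono) auto
    qed (use assms that \<open>0 < x\<close> \<open>0 < bose x\<close> \<open>0 < bose alo\<close> in
      \<open>auto intro!: lattice_bose_sum_nonneg mult_nonneg_nonneg\<close>)
    moreover have "lattice_bose_sum b y \<le> lattice_bose_sum b x"
      using assms that \<open>0 < x\<close> by (intro lattice_bose_sum_antimono) auto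
    ultimately show ?thesis
      using that by (simp add: algebra_simps)
  qed
  show ?thesis
  proof (rule lipschitz_onI)
    show "dist (lattice_bose_sum b x) (lattice_bose_sum b y) \<le> ?L * dist x y"
      if "x \<in> {alo..ahi}" "y \<in> {alo..ahi}" for x y
      using ordered[of x y] ordered[of y x] that
      by (cases "x \<le> y") (auto simp: dist_real_def abs_minus_commute)
    show "0 \<le> ?L"
      using assms by (auto intro!: mult_nonneg_nonneg lattice_bose_sum_nonneg add_nonneg_nonneg
        less_imp_le[OF bose_pos])
  qed
qed

lemma bose_sum_strict_mono:
  assumes "0 < \<beta>" "m1 < m2" "m2 < 0"
  shows "bose_sum \<beta> m1 < bose_sum \<beta> m2"
  unfolding bose_sum_eq_lattice_bose_sum
  using assms by (intro lattice_bose_sum_strict_antimono) (auto simp: mult_pos_neg)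

lemma bose_sum_mono: "0 < \<beta> \<Longrightarrow> m1 \<le> m2 \<Longrightarrow> m2 < 0 \<Longrightarrow> bose_sum \<beta> m1 \<le> bose_sum \<beta> m2"
  using bose_sum_strict_mono[of \<beta> m1 m2] by (cases "m1 = m2") auto

lemma bose_sum_continuous_on:
  assumes "0 < \<beta>" "mb < 0"
  shows "continuous_on {ma..mb} (bose_sum \<beta>)"
proof -
  have cont: "continuous_on {- \<beta> * mb..- \<beta> * ma} (lattice_bose_sum (4 * pi^2 * \<beta>))"
    by (rule lipschitz_on_continuous_on[OF lattice_bose_sum_lipschitz]) (use assms in \<open>auto simp: mult_pos_neg\<close>)
  have image: "(\<lambda>m. - \<beta> * m) ` {ma..mb} \<subseteq> {- \<beta> * mb..- \<beta> * ma}"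
    using assms by (auto intro: mult_left_mono)
  have "continuous_on {ma..mb} (\<lambda>m. lattice_bose_sum (4 * pi^2 * \<beta>) (- \<beta> * m))"
    by (rule continuous_on_compose2[OF cont _ image]) (intro continuous_intros)
  then show ?thesis
    by (simp add: bose_sum_eq_lattice_bose_sum)
qed

lemma inverse_minus_one_le_bose_sum:
  assumes "0 < \<beta>" "m < 0"
  shows "1 / (- \<beta> * m) - 1 \<le> bose_sum \<beta> m"
proof -
  have "0 < - \<beta> * m"
    using assms by (simp add: mult_pos_neg)
  then have "1 / (- \<beta> * m) - 1 \<le> bose (- \<beta> * m)"
    by (rule inverse_minus_one_le_bose)
  also have "\<dots> \<le> lattice_bose_sum (4 * pi^2 * \<beta>) (- \<beta> * m)"
    using \<open>0 < - \<beta> * m\<close> assms by (intro bose_le_lattice_bose_sum) auto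
  finally show ?thesis
    by (simp add: bose_sum_eq_lattice_bose_sum)
qed

lemma zeta32_pos: "0 < zeta32"
proof -
  have "summable (\<lambda>k. real k powr (-3/2))"
    by (simp add: summable_real_powr_iff)
  then have "summable (\<lambda>k. real (Suc k) powr (-3/2))"
    by (subst summable_Suc_iff)
  then have "summable (\<lambda>k. 1 / real (Suc k) powr (3/2))"
    by (simp add: powr_minus_divide)
  then show ?thesis
    unfolding zeta32_def by (rule suminf_pos) simp
qed

lemma beta_c_eq: "beta_c \<eta> = zeta32 powr (2/3) / (4 * pi) * \<eta> powr (-(2/3))"
proof -
  have "(\<eta> / zeta32) powr (-(2/3)) = \<eta> powr (-(2/3)) * inverse (zeta32 powr (-(2/3)))"
    unfolding powr_divide by (simp only: divide_inverse)
  also have "inverse (zeta32 powr (-(2/3))) = zeta32 powr (2/3)"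
    by (simp only: powr_minus inverse_inverse_eq)
  finally show ?thesis
    by (simp add: beta_c_def)
qed

lemma bose_sum_scaled_bounds:
  fixes D \<eta> m :: real
  defines "\<beta> \<equiv> D * \<eta> powr (-(2/3))" and "V \<equiv> (4 * pi^2 * D) powr (-3/2)"
  assumes D: "0 < D" and \<eta>: "(4 * pi^2 * D) powr (3/2) \<le> \<eta>" and m: "m < 0"
  shows "exp (-(\<beta> * (- m) + 3)) * V * \<eta> \<le> bose_sum \<beta> m"
    and "bose_sum \<beta> m \<le> bose (\<beta> * (- m)) + 156 * V * \<eta>"
proof -
  define b where "b = 4 * pi^2 * \<beta>"
  have "0 < 4 * pi^2 * D"
    using D by simp
  then have "0 < (4 * pi^2 * D) powr (3/2)"
    by (simp only: powr_gt_zero)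
  then have "0 < \<eta>"
    using \<eta> by linarith
  have "4 * pi^2 * D = ((4 * pi^2 * D) powr (3/2)) powr (2/3)"
    using D by (simp add: powr_powr)
  also have "\<dots> \<le> \<eta> powr (2/3)"
    by (rule powr_mono2) (use \<eta> in auto)
  finally have "4 * pi^2 * D \<le> \<eta> powr (2/3)" .
  moreover have "b = 4 * pi^2 * D / \<eta> powr (2/3)"
    by (simp add: b_def \<beta>_def powr_minus_divide)
  ultimately have "b \<le> 1"
    using \<open>0 < \<eta>\<close> by simp
  have "0 < \<beta>"
    using D \<open>0 < \<eta>\<close> by (simp add: \<beta>_def)
  then have "0 < b" "0 < \<beta> * (- m)"
    using m by (simp_all add: b_def mult_pos_neg)
  have "b powr (-3/2) = V * (\<eta> powr (-(2/3))) powr (-3/2)"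
    unfolding b_def \<beta>_def V_def by (simp only: powr_mult mult.assoc)
  also have "\<dots> = V * \<eta>"
    using \<open>0 < \<eta>\<close> by (simp add: powr_powr)
  finally have bV: "b powr (-3/2) = V * \<eta>" .
  have sum_eq: "bose_sum \<beta> m = lattice_bose_sum b (\<beta> * (- m))"
    by (simp add: bose_sum_eq_lattice_bose_sum b_def)
  show "exp (-(\<beta> * (- m) + 3)) * V * \<eta> \<le> bose_sum \<beta> m"
    using lattice_bose_sum_lower[OF \<open>0 < b\<close> \<open>b \<le> 1\<close> \<open>0 < \<beta> * (- m)\<close>]
    unfolding sum_eq bV by (simp only: mult.assoc)
  show "bose_sum \<beta> m \<le> bose (\<beta> * (- m)) + 156 * V * \<eta>"
    using lattice_bose_sum_upper[OF \<open>0 < b\<close> \<open>b \<le> 1\<close> \<open>0 < \<beta> * (- m)\<close>]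
    unfolding sum_eq bV by (simp only: mult.assoc)
qed

lemma bose_sum_exceeds_line:
  assumes "0 < \<beta>" "0 < \<eta>" "0 < v0"
  obtains mb where "mb < 0" "(\<mu> - mb) * \<eta> / v0 \<le> bose_sum \<beta> mb"
proof -
  define R where "R = (\<bar>\<mu>\<bar> + 1 / \<beta>) * \<eta> / v0"
  have "0 \<le> R"
    using assms by (simp add: R_def)
  define mb where "mb = - 1 / (\<beta> * (R + 2))"
  have "mb < 0"
    using assms \<open>0 \<le> R\<close> by (simp add: mb_def)
  have "\<beta> * 1 \<le> \<beta> * (R + 2)"
    using assms \<open>0 \<le> R\<close> by (intro mult_left_mono) auto
  then have "- mb \<le> 1 / \<beta>"
    unfolding mb_def using assms \<open>0 \<le> R\<close> by (simp add: frac_le)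
  then have "\<mu> - mb \<le> \<bar>\<mu>\<bar> + 1 / \<beta>"
    by linarith
  then have "(\<mu> - mb) * \<eta> / v0 \<le> R"
    unfolding R_def using assms by (intro divide_right_mono mult_right_mono) auto
  also have "R \<le> bose_sum \<beta> mb"
    using inverse_minus_one_le_bose_sum[OF assms(1) \<open>mb < 0\<close>] assms \<open>0 \<le> R\<close>
    by (simp add: mb_def)
  finally show thesis
    using \<open>mb < 0\<close> by (rule that[rotated])
qed

lemma bose_sum_equation_unique_solution:
  assumes "0 < \<beta>" "0 < \<eta>" "0 < v0"
  shows "\<exists>!m. m < 0 \<and> bose_sum \<beta> m = (\<mu> - m) * \<eta> / v0"
proof -
  define F where "F m = bose_sum \<beta> m - (\<mu> - m) * \<eta> / v0" for m
  have F_strict: "F m1 < F m2" if "m1 < m2" "m2 < 0" for m1 m2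
  proof -
    have "(\<mu> - m2) * \<eta> / v0 \<le> (\<mu> - m1) * \<eta> / v0"
      using that assms by (intro divide_right_mono mult_right_mono) auto
    with bose_sum_strict_mono[OF assms(1) that] show ?thesis
      by (simp add: F_def)
  qed
  obtain mb where "mb < 0" "0 \<le> F mb"
    using bose_sum_exceeds_line[OF assms, of \<mu>] by (auto simp: F_def)
  define ma where "ma = min mb (\<mu> - (bose_sum \<beta> mb + 1) * v0 / \<eta>)"
  have "ma \<le> mb" "(bose_sum \<beta> mb + 1) * v0 / \<eta> \<le> \<mu> - ma"
    by (simp_all add: ma_def)
  then have "bose_sum \<beta> ma \<le> bose_sum \<beta> mb" "bose_sum \<beta> mb + 1 \<le> (\<mu> - ma) * \<eta> / v0"
    using assms \<open>mb < 0\<close> by (simp_all add: bose_sum_mono field_simps)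
  then have "F ma \<le> 0"
    by (simp add: F_def)
  moreover have "continuous_on {ma..mb} F"
    unfolding F_def using assms \<open>mb < 0\<close> by (intro continuous_intros bose_sum_continuous_on) auto
  ultimately obtain m where m: "ma \<le> m" "m \<le> mb" "F m = 0"
    using IVT'[of F ma 0 mb] \<open>0 \<le> F mb\<close> \<open>ma \<le> mb\<close> by blast
  show ?thesis
  proof (rule ex1I[of _ m])
    show "m < 0 \<and> bose_sum \<beta> m = (\<mu> - m) * \<eta> / v0"
      using m \<open>mb < 0\<close> by (simp add: F_def)
    show "m' = m" if "m' < 0 \<and> bose_sum \<beta> m' = (\<mu> - m') * \<eta> / v0" for m'
      using F_strict[of m' m] F_strict[of m m'] that m \<open>mb < 0\<close>
      by (cases m' m rule: linorder_cases) (auto simp: F_def)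
  qed
qed

lemma chemical_potential_gap_lower:
  fixes D \<eta> \<mu> m v0 c0 :: real
  defines "V \<equiv> (4 * pi^2 * D) powr (-3/2)"
  assumes D: "0 < D" and v0: "0 < v0" and c0: "0 < c0"
    and \<eta>: "1 \<le> \<eta>" "(4 * pi^2 * D) powr (3/2) \<le> \<eta>"
    and \<mu>: "- (\<eta> powr (2/3)) / c0 \<le> \<mu>" and m: "m < 0"
    and eq: "bose_sum (D * \<eta> powr (-(2/3))) m = (\<mu> - m) * \<eta> / v0"
  shows "min 1 (v0 * exp (-(D * (1 + 1/c0) + 3)) * V) \<le> \<mu> - m"
proof (cases "1 \<le> \<mu> - m")
  case False
  define \<beta> where "\<beta> = D * \<eta> powr (-(2/3))"
  have "1 \<le> \<eta> powr (2/3)"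
    using \<eta> by (intro ge_one_powr_ge_zero) auto
  then have "\<beta> \<le> D" and \<beta>_eq: "\<beta> * \<eta> powr (2/3) = D"
    using D \<eta> by (simp_all add: \<beta>_def powr_minus_divide divide_le_eq)
  have "- m \<le> 1 + \<eta> powr (2/3) / c0"
    using False \<mu> by (simp add: neg_divide_le_eq)
  moreover have "0 \<le> \<beta>"
    using D by (simp add: \<beta>_def)
  ultimately have "\<beta> * (- m) \<le> \<beta> * (1 + \<eta> powr (2/3) / c0)"
    by (rule mult_left_mono)
  also have "\<dots> = \<beta> + D / c0"
    by (simp add: distrib_left times_divide_eq_right \<beta>_eq)
  also have "\<dots> \<le> D * (1 + 1/c0)"
    using \<open>\<beta> \<le> D\<close> by (simp add: distrib_left)
  finally have "exp (-(D * (1 + 1/c0) + 3)) \<le> exp (-(\<beta> * (- m) + 3))"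
    by simp
  then have "exp (-(D * (1 + 1/c0) + 3)) * V * \<eta> \<le> exp (-(\<beta> * (- m) + 3)) * V * \<eta>"
    using \<eta> by (intro mult_right_mono) (auto simp: V_def)
  also have "\<dots> \<le> (\<mu> - m) * \<eta> / v0"
    using bose_sum_scaled_bounds(1)[OF D \<eta>(2) m] eq by (simp add: \<beta>_def V_def)
  finally have "v0 * exp (-(D * (1 + 1/c0) + 3)) * V * \<eta> \<le> (\<mu> - m) * \<eta>"
    using v0 by (simp add: field_simps)
  then show ?thesis
    using \<eta> by (simp add: mult_right_le_imp_le min.coboundedI2)
qed simp

lemma chemical_potential_gap_upper:
  fixes D \<eta> \<mu> m v0 c0 :: real
  defines "V \<equiv> (4 * pi^2 * D) powr (-3/2)"
  assumes D: "0 < D" and v0: "0 < v0" and c0: "0 < c0" "c0 \<le> 1"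
    and \<eta>: "1 \<le> \<eta>" "(4 * pi^2 * D) powr (3/2) \<le> \<eta>"
    and \<mu>: "\<mu> \<le> 1 / c0" and m: "m < 0"
    and eq: "bose_sum (D * \<eta> powr (-(2/3))) m = (\<mu> - m) * \<eta> / v0"
  shows "\<mu> - m \<le> max (2/c0) (v0 * (1/D + 156 * V))"
proof (cases "\<mu> - m \<le> 2/c0")
  case False
  define \<beta> where "\<beta> = D * \<eta> powr (-(2/3))"
  have "0 < \<beta>"
    using D \<eta> by (simp add: \<beta>_def)
  have "1 / c0 \<le> - m"
    using False \<mu> by simp
  then have "\<beta> / c0 \<le> \<beta> * (- m)"
    using mult_left_mono[of "1 / c0" "- m" \<beta>] \<open>0 < \<beta>\<close> by simp
  moreover have "0 < \<beta> / c0"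
    using \<open>0 < \<beta>\<close> c0 by simp
  ultimately have "bose (\<beta> * (- m)) \<le> 1 / (\<beta> * (- m))"
    by (intro bose_le_inverse) linarith
  also have "\<dots> \<le> 1 / (\<beta> / c0)"
    by (rule frac_le) (use \<open>\<beta> / c0 \<le> \<beta> * (- m)\<close> \<open>0 < \<beta> / c0\<close> in auto)
  also have "\<dots> = c0 * \<eta> powr (2/3) / D"
    using D \<eta> by (simp add: \<beta>_def powr_minus_divide)
  also have "\<dots> \<le> \<eta> / D"
  proof -
    have "c0 * \<eta> powr (2/3) \<le> \<eta> powr (2/3)"
      by (rule mult_left_le_one_le) (use c0 in auto)
    also have "\<dots> \<le> \<eta> powr 1"
      using \<eta> by (intro powr_mono) auto
    finally show ?thesis
      using D \<eta> by (simp add: divide_right_mono)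
  qed
  finally have "(\<mu> - m) * \<eta> / v0 \<le> \<eta> / D + 156 * V * \<eta>"
    using bose_sum_scaled_bounds(2)[OF D \<eta>(2) m] eq by (simp add: \<beta>_def V_def)
  then have "(\<mu> - m) * \<eta> \<le> v0 * (1/D + 156 * V) * \<eta>"
    using v0 by (simp add: field_simps)
  then show ?thesis
    using \<eta> by (simp add: mult_right_le_imp_le max.coboundedI2)
qed simp

lemma neg_chemical_potential_le:
  fixes \<eta> \<mu> m s_hi c0 :: real
  assumes "0 < c0" "0 \<le> s_hi" "1 \<le> \<eta>" "- (\<eta> powr (2/3)) / c0 \<le> \<mu>" "\<mu> - m \<le> s_hi"
  shows "0 \<le> \<mu> \<Longrightarrow> - m \<le> s_hi + 1/c0"
    and "\<mu> < 0 \<Longrightarrow> - m \<le> (s_hi + 1/c0) * \<eta> powr (2/3)"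
proof -
  show "- m \<le> s_hi + 1/c0" if "0 \<le> \<mu>"
    using assms that by (simp add: add_increasing2)
  have "1 \<le> \<eta> powr (2/3)"
    using assms by (intro ge_one_powr_ge_zero) auto
  have "- m \<le> s_hi + \<eta> powr (2/3) / c0"
    using assms by (simp add: neg_divide_le_eq)
  also have "\<dots> \<le> s_hi * \<eta> powr (2/3) + \<eta> powr (2/3) / c0"
    using mult_left_mono[OF \<open>1 \<le> \<eta> powr (2/3)\<close>, of s_hi] assms by simp
  finally show "- m \<le> (s_hi + 1/c0) * \<eta> powr (2/3)"
    by (simp add: distrib_right)
qed

lemma uniform_bounds_of_gap_bounds:
  fixes S :: "real \<Rightarrow> real \<Rightarrow> real" and v0 c0 s_lo s_hi \<eta>_min :: real
  assumes v0: "0 < v0" and c0: "0 < c0" and s: "0 < s_lo" "s_lo \<le> 1" "0 < s_hi" and "1 \<le> \<eta>_min"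
    and gap: "\<And>\<eta> \<mu> m. \<eta>_min \<le> \<eta> \<Longrightarrow> - (\<eta> powr (2/3)) / c0 \<le> \<mu> \<Longrightarrow> \<mu> \<le> 1 / c0 \<Longrightarrow> m < 0 \<Longrightarrow>
      S \<eta> m = (\<mu> - m) * \<eta> / v0 \<Longrightarrow> s_lo \<le> \<mu> - m \<and> \<mu> - m \<le> s_hi"
  shows "\<exists>c C \<eta>0 :: real. 0 < c \<and> c \<le> 1 \<and> C > 0 \<and> \<eta>0 > 0 \<and>
    (\<forall>\<eta> \<mu> m :: real. \<eta> \<ge> \<eta>0 \<and> - (\<eta> powr (2/3)) / c0 \<le> \<mu> \<and> \<mu> \<le> 1 / c0 \<and>
      m < 0 \<and> S \<eta> m = (\<mu> - m) * \<eta> / v0 \<longrightarrow>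
      c \<le> \<mu> - m \<and> \<mu> - m \<le> 1 / c \<and>
      (\<mu> \<ge> 0 \<longrightarrow> - m \<le> C) \<and>
      (\<mu> < 0 \<longrightarrow> - m \<le> C * \<eta> powr (2/3)) \<and>
      c * \<eta> \<le> S \<eta> m \<and> S \<eta> m \<le> \<eta> / c)"
proof -
  define c where "c = min (min s_lo (s_lo / v0)) (min (1 / s_hi) (v0 / s_hi))"
  have "0 < c" "c \<le> 1"
    using s v0 by (auto simp: c_def)
  have "c \<le> s_lo" "c \<le> s_lo / v0" "c \<le> 1 / s_hi" "c \<le> v0 / s_hi"
    by (simp_all add: c_def)
  then have "s_hi \<le> 1 / c" "s_hi / v0 \<le> 1 / c"
    using \<open>0 < c\<close> s v0 by (simp_all add: field_simps)
  have bounds: "c \<le> \<mu> - m \<and> \<mu> - m \<le> 1 / c \<and> (\<mu> \<ge> 0 \<longrightarrow> - m \<le> s_hi + 1/c0) \<and>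
      (\<mu> < 0 \<longrightarrow> - m \<le> (s_hi + 1/c0) * \<eta> powr (2/3)) \<and> c * \<eta> \<le> S \<eta> m \<and> S \<eta> m \<le> \<eta> / c"
    if \<eta>: "\<eta>_min \<le> \<eta>" and \<mu>: "- (\<eta> powr (2/3)) / c0 \<le> \<mu>" "\<mu> \<le> 1 / c0"
      and m: "m < 0" and eq: "S \<eta> m = (\<mu> - m) * \<eta> / v0" for \<eta> \<mu> m
  proof (intro conjI impI)
    have lo: "s_lo \<le> \<mu> - m" and hi: "\<mu> - m \<le> s_hi"
      using gap[OF \<eta> \<mu> m eq] by auto
    have "1 \<le> \<eta>"
      using \<eta> \<open>1 \<le> \<eta>_min\<close> by simp
    show "c \<le> \<mu> - m" "\<mu> - m \<le> 1 / c"
      using lo hi \<open>c \<le> s_lo\<close> \<open>s_hi \<le> 1 / c\<close> by linarith+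
    show "- m \<le> s_hi + 1/c0" if "0 \<le> \<mu>"
      using neg_chemical_potential_le(1)[OF c0 _ \<open>1 \<le> \<eta>\<close> \<mu>(1) hi] s that by simp
    show "- m \<le> (s_hi + 1/c0) * \<eta> powr (2/3)" if "\<mu> < 0"
      using neg_chemical_potential_le(2)[OF c0 _ \<open>1 \<le> \<eta>\<close> \<mu>(1) hi] s that by simp
    have "c \<le> (\<mu> - m) / v0"
      using lo v0 \<open>c \<le> s_lo / v0\<close> by (meson divide_right_mono less_imp_le order_trans)
    then show "c * \<eta> \<le> S \<eta> m"
      using \<open>1 \<le> \<eta>\<close> mult_right_mono[of c "(\<mu> - m) / v0" \<eta>] by (simp add: eq)
    have "(\<mu> - m) / v0 \<le> 1 / c"
      using hi v0 \<open>s_hi / v0 \<le> 1 / c\<close> by (meson divide_right_mono less_imp_le order_trans)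
    then show "S \<eta> m \<le> \<eta> / c"
      using \<open>1 \<le> \<eta>\<close> mult_right_mono[of "(\<mu> - m) / v0" "1 / c" \<eta>] by (simp add: eq)
  qed
  have "0 < s_hi + 1/c0"
    using s c0 by (simp add: add_pos_pos)
  with \<open>0 < c\<close> \<open>c \<le> 1\<close> \<open>1 \<le> \<eta>_min\<close> bounds show ?thesis
    by (intro exI[of _ c] exI[of _ "s_hi + 1/c0"] exI[of _ \<eta>_min]) auto
qed

lemma chemical_potential_bounds:
  fixes \<kappa> v0 c0 :: real
  assumes \<kappa>: "0 < \<kappa>" and v0: "0 < v0" and c0: "0 < c0" "c0 \<le> 1"
  shows "\<exists>c C \<eta>0 :: real. 0 < c \<and> c \<le> 1 \<and> C > 0 \<and> \<eta>0 > 0 \<and>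
    (\<forall>\<eta> \<mu> m :: real. \<eta> \<ge> \<eta>0 \<and> - (\<eta> powr (2/3)) / c0 \<le> \<mu> \<and> \<mu> \<le> 1 / c0 \<and>
      m < 0 \<and> bose_sum (\<kappa> * beta_c \<eta>) m = (\<mu> - m) * \<eta> / v0 \<longrightarrow>
      c \<le> \<mu> - m \<and> \<mu> - m \<le> 1 / c \<and>
      (\<mu> \<ge> 0 \<longrightarrow> - m \<le> C) \<and>
      (\<mu> < 0 \<longrightarrow> - m \<le> C * \<eta> powr (2/3)) \<and>
      c * \<eta> \<le> bose_sum (\<kappa> * beta_c \<eta>) m \<and>
      bose_sum (\<kappa> * beta_c \<eta>) m \<le> \<eta> / c)"
proof -
  define D where "D = \<kappa> * zeta32 powr (2/3) / (4 * pi)"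
  define V where "V = (4 * pi^2 * D) powr (-3/2)"
  have "0 < D"
    using \<kappa> zeta32_pos by (simp add: D_def)
  show ?thesis
  proof (rule uniform_bounds_of_gap_bounds[where S = "\<lambda>\<eta> m. bose_sum (\<kappa> * beta_c \<eta>) m"
        and s_lo = "min 1 (v0 * exp (-(D * (1 + 1/c0) + 3)) * V)"
        and s_hi = "max (2/c0) (v0 * (1/D + 156 * V))"
        and \<eta>_min = "max 1 ((4 * pi^2 * D) powr (3/2))"])
    fix \<eta> \<mu> m
    assume \<eta>: "max 1 ((4 * pi^2 * D) powr (3/2)) \<le> \<eta>"
      and \<mu>: "- (\<eta> powr (2/3)) / c0 \<le> \<mu>" "\<mu> \<le> 1 / c0" and m: "m < 0"
      and eq: "bose_sum (\<kappa> * beta_c \<eta>) m = (\<mu> - m) * \<eta> / v0"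
    have "\<kappa> * beta_c \<eta> = D * \<eta> powr (-(2/3))"
      by (simp add: beta_c_eq D_def)
    then have eq': "bose_sum (D * \<eta> powr (-(2/3))) m = (\<mu> - m) * \<eta> / v0"
      using eq by simp
    show "min 1 (v0 * exp (-(D * (1 + 1/c0) + 3)) * V) \<le> \<mu> - m \<and> \<mu> - m \<le> max (2/c0) (v0 * (1/D + 156 * V))"
      unfolding V_def using \<eta>
      by (intro conjI chemical_potential_gap_lower[OF \<open>0 < D\<close> v0 c0(1) _ _ \<mu>(1) m eq']
          chemical_potential_gap_upper[OF \<open>0 < D\<close> v0 c0 _ _ \<mu>(2) m eq']) auto
  qed (use v0 c0 \<open>0 < D\<close> in \<open>auto simp: V_def less_max_iff_disj\<close>)
qed

theorem lemmaA1:
  shows "(\<forall>\<beta> \<eta> v0 \<mu> :: real. \<beta> > 0 \<and> \<eta> > 0 \<and> v0 > 0 \<longrightarrow>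
            (\<exists>!m. m < 0 \<and> bose_sum \<beta> m = (\<mu> - m) * \<eta> / v0))
       \<and> (\<forall>\<kappa> v0 c0 :: real. \<kappa> > 0 \<and> v0 > 0 \<and> 0 < c0 \<and> c0 \<le> 1 \<longrightarrow>
            (\<exists>c C \<eta>0 :: real. 0 < c \<and> c \<le> 1 \<and> C > 0 \<and> \<eta>0 > 0 \<and>
               (\<forall>\<eta> \<mu> m :: real. \<eta> \<ge> \<eta>0 \<and> - (\<eta> powr (2/3)) / c0 \<le> \<mu> \<and> \<mu> \<le> 1 / c0 \<and>
                  m < 0 \<and> bose_sum (\<kappa> * beta_c \<eta>) m = (\<mu> - m) * \<eta> / v0 \<longrightarrow>
                  c \<le> \<mu> - m \<and> \<mu> - m \<le> 1 / c \<and>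
                  (\<mu> \<ge> 0 \<longrightarrow> - m \<le> C) \<and>
                  (\<mu> < 0 \<longrightarrow> - m \<le> C * \<eta> powr (2/3)) \<and>
                  c * \<eta> \<le> bose_sum (\<kappa> * beta_c \<eta>) m \<and>
                  bose_sum (\<kappa> * beta_c \<eta>) m \<le> \<eta> / c)))"
  by (intro conjI allI impI bose_sum_equation_unique_solution chemical_potential_bounds) auto

end
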